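(* Let $\tau_1(\mathbf X)$ be the lifetime of a coherent system whose component lifetimes $X_1,\dots,X_n$ are (possibly dependent) identically distributed as $X$, with domination function $h_1$, i.e. $\bar F_{\tau_1(\mathbf X)}(x)=h_1(\bar F_X(x))$; and let $\tau_2(\mathbf Y)$ be the lifetime of a coherent system whose component lifetimes $Y_1,\dots,Y_m$ are identically distributed as $Y$, with domination function $h_2$, i.e. $\bar F_{\tau_2(\mathbf Y)}(x)=h_2(\bar F_Y(x))$. For $p\in(0,1)$ set $R_i(p)=(1-p)h_i'(p)/(1-h_i(p))$, $i=1,2$. Suppose that (i) $R_1(p)$ and $R_1(p)/R_2(p)$ are increasing in $p\in(0,1)$; (ii) $pR_1'(p)/R_1(p)$ or $pR_2'(p)/R_2(p)$ is decreasing in $p\in(0,1)$; (iii) $X\underset{b}{\prec}Y$ and $X\le_{hr}Y$. Then $\tau_1(\mathbf X)\underset{b}{\prec}\tau_2(\mathbf Y)$.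
   Context: All random variables are non-negative and absolutely continuous with support $[0,\infty)$. For a random variable $W$: density $f_W$, cdf $F_W$, survival $\bar F_W=1-F_W$, hazard rate $r_W=f_W/\bar F_W$, reversed hazard rate $\tilde r_W=f_W/F_W$. $X\le_{hr}Y$ means $\bar F_Y(x)/\bar F_X(x)$ is increasing in $x$. $X\underset{b}{\prec}Y$ ($X$ ages faster than $Y$ in reversed failure rate) means $\tilde r_X(x)/\tilde r_Y(x)$ is decreasing in $x\ge0$. For a coherent system with identically distributed (possibly dependent) components with common distribution that of $X$, the system reliability is $h(\bar F_X(x))$ for a domination function $h:[0,1]\to[0,1]$ (depending on structure and survival copula), increasing, continuous, $h(0)=0$, $h(1)=1$, assumed differentiable as needed. "Increasing" means non-decreasing, "decreasing" means non-increasing. *)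

theory Defs
  imports "HOL-Analysis.Analysis"
begin

definition lifetime_dist :: "(real \<Rightarrow> real) \<Rightarrow> (real \<Rightarrow> real) \<Rightarrow> bool" where
  "lifetime_dist F f \<longleftrightarrow>
     (\<forall>x\<le>0. F x = 0) \<and> (\<forall>x>0. 0 < F x \<and> F x < 1) \<and> continuous_on UNIV F \<and>
     (\<forall>x>0. (F has_real_derivative f x) (at x)) \<and> (\<forall>x. 0 \<le> f x) \<and>
     (F \<longlongrightarrow> 1) at_top"

definition survival :: "(real \<Rightarrow> real) \<Rightarrow> real \<Rightarrow> real" where
  "survival F x = 1 - F x"

definition hazard_rate :: "(real \<Rightarrow> real) \<Rightarrow> (real \<Rightarrow> real) \<Rightarrow> real \<Rightarrow> real" where
  "hazard_rate F f x = f x / survival F x"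

definition rev_hazard_rate :: "(real \<Rightarrow> real) \<Rightarrow> (real \<Rightarrow> real) \<Rightarrow> real \<Rightarrow> real" where
  "rev_hazard_rate F f x = f x / F x"

definition hr_order :: "(real \<Rightarrow> real) \<Rightarrow> (real \<Rightarrow> real) \<Rightarrow> bool" where
  "hr_order FX FY \<longleftrightarrow> mono_on {0..} (\<lambda>x. survival FY x / survival FX x)"

text \<open>X ages faster than Y in reversed failure rate: rhr_X / rhr_Y decreasing
 (on x > 0, where the reversed hazard rates are defined).\<close>
definition ages_faster_rfr ::
  "(real \<Rightarrow> real) \<Rightarrow> (real \<Rightarrow> real) \<Rightarrow> (real \<Rightarrow> real) \<Rightarrow> (real \<Rightarrow> real) \<Rightarrow> bool" where
  "ages_faster_rfr FX fX FY fY \<longleftrightarrow>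
     antimono_on {0<..} (\<lambda>x. rev_hazard_rate FX fX x / rev_hazard_rate FY fY x)"

definition domination_fun :: "(real \<Rightarrow> real) \<Rightarrow> bool" where
  "domination_fun h \<longleftrightarrow> mono_on {0..1} h \<and> continuous_on {0..1} h \<and> h 0 = 0 \<and> h 1 = 1
     \<and> h ` {0..1} \<subseteq> {0..1}"

end

theory Submission
  imports Defs
begin

text \<open>Differentiating \<open>F\<^sub>\<tau>\<^sub>1 = 1 - h\<^sub>1 \<circ> Fbar\<^sub>X\<close> shows that the reversed hazard rate of
  \<open>\<tau>\<^sub>1\<close> is \<open>R\<^sub>1(Fbar\<^sub>X) \<cdot> rhr\<^sub>X\<close>, and likewise for \<open>\<tau>\<^sub>2\<close>. Hence the ratio of the
  reversed hazard rates of the systems is \<open>g \<cdot> rhr\<^sub>X / rhr\<^sub>Y\<close> with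
  \<open>g = R\<^sub>1(Fbar\<^sub>X) / R\<^sub>2(Fbar\<^sub>Y)\<close>, and the second factor decreases by (iii). Writing
  \<open>a = R\<^sub>1'/R\<^sub>1\<close> at \<open>Fbar\<^sub>X\<close> and \<open>b = R\<^sub>2'/R\<^sub>2\<close> at \<open>Fbar\<^sub>Y\<close>, the sign of \<open>g'\<close> reduces to
  \<open>b f\<^sub>Y \<le> a f\<^sub>X\<close>. This is the product of the hazard rate inequality
  \<open>f\<^sub>Y / Fbar\<^sub>Y \<le> f\<^sub>X / Fbar\<^sub>X\<close> with the elasticity comparison \<open>Fbar\<^sub>Y b \<le> Fbar\<^sub>X a\<close>,
  which follows from \<open>Fbar\<^sub>X \<le> Fbar\<^sub>Y\<close>, (i) and (ii).\<close>

lemma lifetime_distD: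
  assumes "lifetime_dist F f" "0 < x"
  shows "0 < F x" "F x < 1" "(F has_real_derivative f x) (at x)" "0 \<le> f x"
  using assms unfolding lifetime_dist_def by auto

lemma lifetime_dist_nonpos: "lifetime_dist F f \<Longrightarrow> x \<le> 0 \<Longrightarrow> F x = 0"
  unfolding lifetime_dist_def by auto

lemma lifetime_dist_mono:
  assumes "lifetime_dist F f"
  shows "mono F"
proof (rule monoI)
  fix a b :: real
  assume "a \<le> b"
  show "F a \<le> F b"
  proof (cases "a \<le> 0")
    case True
    then show ?thesis
      using assms lifetime_distD(1)[of F f b] lifetime_dist_nonpos[of F f] by (cases "b \<le> 0") auto
  next
    case False
    show ?thesis
    proof (rule DERIV_nonneg_imp_nondecreasing[OF \<open>a \<le> b\<close>])
      fix x
      assume "a \<le> x"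
      with False have "0 < x" by simp
      then show "\<exists>y. (F has_real_derivative y) (at x) \<and> 0 \<le> y"
        using lifetime_distD(3,4)[OF assms] by blast
    qed
  qed
qed

lemma survival_pos:
  assumes "lifetime_dist F f"
  shows "0 < survival F x"
proof (cases "0 < x")
  case True
  then show ?thesis using lifetime_distD(2)[OF assms] by (simp add: survival_def)
next
  case False
  then show ?thesis using lifetime_dist_nonpos[OF assms] by (simp add: survival_def)
qed

lemma survival_less_one: "lifetime_dist F f \<Longrightarrow> 0 < x \<Longrightarrow> survival F x < 1"
  unfolding survival_def using lifetime_distD(1) by simp

lemma survival_antimono:
  assumes "lifetime_dist F f" "x \<le> y"
  shows "survival F y \<le> survival F x"
  using monoD[OF lifetime_dist_mono[OF assms(1)] assms(2)] unfolding survival_def by simp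

lemma survival_has_real_derivative:
  "lifetime_dist F f \<Longrightarrow> 0 < x \<Longrightarrow> (survival F has_real_derivative - f x) (at x)"
  unfolding survival_def[abs_def] using lifetime_distD(3)
  by (auto intro!: derivative_eq_intros)

lemma rev_hazard_rate_nonneg:
  assumes "lifetime_dist F f" "0 < x"
  shows "0 \<le> rev_hazard_rate F f x"
  unfolding rev_hazard_rate_def using lifetime_distD(1,4)[OF assms] by simp

lemma hr_order_survival_le:
  assumes X: "lifetime_dist FX fX" and Y: "lifetime_dist FY fY" and "hr_order FX FY" "0 \<le> x"
  shows "survival FX x \<le> survival FY x"
proof -
  have "survival FY 0 / survival FX 0 \<le> survival FY x / survival FX x"
    using assms(3,4) unfolding hr_order_def by (auto dest: mono_onD)
  then have "1 \<le> survival FY x / survival FX x"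
    using lifetime_dist_nonpos[OF X] lifetime_dist_nonpos[OF Y] by (simp add: survival_def)
  then show ?thesis
    using survival_pos[OF X] by (simp add: le_divide_eq)
qed

lemma hr_order_hazard_rate_le:
  assumes X: "lifetime_dist FX fX" and Y: "lifetime_dist FY fY" and "hr_order FX FY" "0 < x"
  shows "hazard_rate FY fY x \<le> hazard_rate FX fX x"
proof -
  let ?u = "survival FX x" and ?v = "survival FY x"
  have "((\<lambda>x. survival FY x / survival FX x) has_real_derivative
      (- fY x * ?u - ?v * - fX x) / (?u * ?u)) (at x)"
    using survival_has_real_derivative[OF X] survival_has_real_derivative[OF Y] survival_pos[OF X, of x] \<open>0 < x\<close>
    by (intro DERIV_divide) auto
  then have "0 \<le> (- fY x * ?u - ?v * - fX x) / (?u * ?u)"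
    using assms(3,4) unfolding hr_order_def by (intro mono_on_imp_deriv_nonneg) auto
  moreover have "0 < ?u * ?u"
    using survival_pos[OF X, of x] by simp
  ultimately have "fY x * ?u \<le> fX x * ?v"
    by (simp add: zero_le_divide_iff mult.commute)
  then have "(fY x * ?u - fX x * ?v) / (?v * ?u) \<le> 0"
    using survival_pos[OF X, of x] survival_pos[OF Y, of x] by (intro divide_nonpos_pos) auto
  then show ?thesis
    unfolding hazard_rate_def using survival_pos[OF X, of x] survival_pos[OF Y, of x]
    by (subst frac_le_eq) auto
qed

lemma rev_hazard_rate_distortion:
  assumes F: "(F has_real_derivative f x) (at x)" and G: "(G has_real_derivative g x) (at x)"
    and h: "(h has_real_derivative dh) (at (survival F x))"
    and GF: "\<And>y. survival G y = h (survival F y)" and "F x \<noteq> 0"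
  shows "rev_hazard_rate G g x
    = (1 - survival F x) * dh / (1 - h (survival F x)) * rev_hazard_rate F f x"
proof -
  have G_eq: "G = (\<lambda>y. 1 - h (1 - F y))"
    using GF by (auto simp: survival_def fun_eq_iff algebra_simps)
  have "(G has_real_derivative dh * f x) (at x)"
    unfolding G_eq using h
    by (auto intro!: derivative_eq_intros DERIV_chain2[where f = h] F simp: survival_def)
  then have "g x = dh * f x"
    using G DERIV_unique by blast
  then show ?thesis
    using \<open>F x \<noteq> 0\<close> by (simp add: rev_hazard_rate_def survival_def G_eq)
qed

lemma rev_hazard_rate_distorted_lifetime:
  assumes F: "lifetime_dist F f" and G: "lifetime_dist G g"
    and GF: "\<And>y. survival G y = h (survival F y)"
    and h: "\<And>p. 0 < p \<Longrightarrow> p < 1 \<Longrightarrow> (h has_real_derivative dh p) (at p)" and "0 < x"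
  shows "rev_hazard_rate G g x = (1 - survival F x) * dh (survival F x) / (1 - h (survival F x))
    * rev_hazard_rate F f x"
  using survival_pos[OF F] survival_less_one[OF F \<open>0 < x\<close>] lifetime_distD(1)[OF F \<open>0 < x\<close>]
  by (intro rev_hazard_rate_distortion lifetime_distD(3)[OF F \<open>0 < x\<close>]
      lifetime_distD(3)[OF G \<open>0 < x\<close>] h GF) auto

lemma distortion_ratio_nonneg:
  assumes "domination_fun h" "(h has_real_derivative dh) (at p)" "0 < p" "p < 1"
  shows "0 \<le> (1 - p) * dh / (1 - h p)"
proof -
  have "mono_on {0..1} h" and "h p \<le> 1"
    using assms(1,3,4) unfolding domination_fun_def by (auto simp: image_subset_iff)
  then have "0 \<le> dh"
    using assms(2-4) by (intro mono_on_imp_deriv_nonneg) auto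
  then show ?thesis
    using \<open>h p \<le> 1\<close> \<open>p < 1\<close> by simp
qed

lemma log_deriv_le_of_mono_on_divide:
  fixes f g :: "real \<Rightarrow> real"
  assumes mono: "mono_on {a<..<b} (\<lambda>p. f p / g p)" and "a < p" "p < b"
    and f: "(f has_real_derivative f') (at p)" and g: "(g has_real_derivative g') (at p)"
    and "0 < f p" "0 < g p"
  shows "g' / g p \<le> f' / f p"
proof -
  have "((\<lambda>p. f p / g p) has_real_derivative (f' * g p - f p * g') / (g p * g p)) (at p)"
    using f g \<open>0 < g p\<close> by (intro DERIV_divide) auto
  then have "0 \<le> (f' * g p - f p * g') / (g p * g p)"
    using mono \<open>a < p\<close> \<open>p < b\<close> by (intro mono_on_imp_deriv_nonneg) auto
  moreover have "0 < g p * g p"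
    using \<open>0 < g p\<close> by simp
  ultimately have "g' * f p \<le> f' * g p"
    by (simp add: zero_le_divide_iff mult.commute)
  then have "(g' * f p - f' * g p) / (g p * f p) \<le> 0"
    using \<open>0 < f p\<close> \<open>0 < g p\<close> by (intro divide_nonpos_pos) auto
  then show ?thesis
    using \<open>0 < f p\<close> \<open>0 < g p\<close> by (subst frac_le_eq) auto
qed

text \<open>If \<open>R p = 0\<close>, the junk value \<open>p * R' p / 0 = 0\<close> makes the elasticity nonpositive to the
  right of \<open>p\<close>; where \<open>R\<close> vanishes it has a local minimum, so \<open>R' \<le> 0\<close> on all of \<open>[p, q]\<close>.\<close>
lemma pos_of_antimono_elasticity:
  fixes R :: "real \<Rightarrow> real"
  assumes nonneg: "\<And>r. a < r \<Longrightarrow> r < b \<Longrightarrow> 0 \<le> R r"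
    and deriv: "\<And>r. a < r \<Longrightarrow> r < b \<Longrightarrow> (R has_real_derivative deriv R r) (at r)"
    and elasticity: "antimono_on {a<..<b} (\<lambda>r. r * deriv R r / R r)"
    and "0 \<le> a" "a < p" "p \<le> q" "q < b" "0 < R q"
  shows "0 < R p"
proof (rule ccontr)
  assume "\<not> 0 < R p"
  with nonneg \<open>a < p\<close> \<open>p \<le> q\<close> \<open>q < b\<close> have Rp: "R p = 0" by force
  have deriv_nonpos: "deriv R r \<le> 0" if r: "p \<le> r" "r \<le> q" for r
  proof (cases "R r = 0")
    case True
    have "(R has_real_derivative deriv R r) (at r)" and "0 < min (r - a) (b - r)"
      using deriv r assms(5-7) by auto
    moreover have "\<forall>y. \<bar>r - y\<bar> < min (r - a) (b - r) \<longrightarrow> R r \<le> R y"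
      using True nonneg by (auto simp: abs_less_iff)
    ultimately have "deriv R r = 0"
      by (rule DERIV_local_min)
    then show ?thesis by simp
  next
    case False
    moreover have "0 \<le> R r"
      using nonneg r assms(5-7) by simp
    ultimately have "0 < R r" by simp
    have "r * deriv R r / R r \<le> p * deriv R p / R p"
      using elasticity r assms(5-7) unfolding monotone_on_def by auto
    then have "r * deriv R r \<le> 0"
      using Rp \<open>0 < R r\<close> by (simp add: divide_le_0_iff)
    then show ?thesis
      using r assms(4,5) by (simp add: mult_le_0_iff)
  qed
  have "R q \<le> R p"
  proof (intro DERIV_nonpos_imp_nonincreasing[OF \<open>p \<le> q\<close>])
    fix r
    assume "p \<le> r" "r \<le> q"
    then show "\<exists>D. (R has_real_derivative D) (at r) \<and> D \<le> 0"
      using deriv[of r] deriv_nonpos[of r] assms(5,7) by auto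
  qed
  with Rp \<open>0 < R q\<close> show False by simp
qed

lemma antimono_on_mult_nonneg:
  fixes f g :: "'a::order \<Rightarrow> real"
  assumes "antimono_on S f" "antimono_on S g" "\<And>x. x \<in> S \<Longrightarrow> 0 \<le> f x" "\<And>x. x \<in> S \<Longrightarrow> 0 \<le> g x"
  shows "antimono_on S (\<lambda>x. f x * g x)"
proof (rule monotone_onI)
  fix x y
  assume "x \<in> S" "y \<in> S" "x \<le> y"
  then show "f y * g y \<le> f x * g x"
    using assms by (intro mult_mono) (auto simp: monotone_on_def)
qed

locale monotone_ratio_pair =
  fixes R1 R2 :: "real \<Rightarrow> real"
  assumes R1_nonneg: "\<And>p. 0 < p \<Longrightarrow> p < 1 \<Longrightarrow> 0 \<le> R1 p"
    and R2_nonneg: "\<And>p. 0 < p \<Longrightarrow> p < 1 \<Longrightarrow> 0 \<le> R2 p"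
    and R1_deriv: "\<And>p. 0 < p \<Longrightarrow> p < 1 \<Longrightarrow> (R1 has_real_derivative deriv R1 p) (at p)"
    and R2_deriv: "\<And>p. 0 < p \<Longrightarrow> p < 1 \<Longrightarrow> (R2 has_real_derivative deriv R2 p) (at p)"
    and R1_mono: "mono_on {0<..<1} R1"
    and ratio_mono: "mono_on {0<..<1} (\<lambda>p. R1 p / R2 p)"
    and elasticity_antimono: "antimono_on {0<..<1} (\<lambda>p. p * deriv R1 p / R1 p)
      \<or> antimono_on {0<..<1} (\<lambda>p. p * deriv R2 p / R2 p)"
begin

lemma log_deriv_le:
  assumes "0 < p" "p < 1" "0 < R1 p" "0 < R2 p"
  shows "deriv R2 p / R2 p \<le> deriv R1 p / R1 p"
  using assms by (intro log_deriv_le_of_mono_on_divide[OF ratio_mono] R1_deriv R2_deriv) auto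

lemma elasticity_le:
  assumes "0 < u" "u \<le> v" "v < 1" "0 < R1 u" "0 < R2 v"
  shows "v * deriv R2 v / R2 v \<le> u * deriv R1 u / R1 u"
  using elasticity_antimono
proof
  assume elasticity: "antimono_on {0<..<1} (\<lambda>p. p * deriv R1 p / R1 p)"
  have "R1 u \<le> R1 v"
    using mono_onD[OF R1_mono, of u v] assms by simp
  then have "deriv R2 v / R2 v \<le> deriv R1 v / R1 v"
    using assms by (intro log_deriv_le) simp_all
  then have "v * deriv R2 v / R2 v \<le> v * deriv R1 v / R1 v"
    using mult_left_mono[of _ _ v] \<open>0 < u\<close> \<open>u \<le> v\<close> by fastforce
  also have "\<dots> \<le> u * deriv R1 u / R1 u"
    using elasticity assms unfolding monotone_on_def by simp
  finally show ?thesis .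
next
  assume elasticity: "antimono_on {0<..<1} (\<lambda>p. p * deriv R2 p / R2 p)"
  have "0 < R2 u"
    using pos_of_antimono_elasticity[OF R2_nonneg R2_deriv elasticity, of u v] assms by simp
  then have "deriv R2 u / R2 u \<le> deriv R1 u / R1 u"
    using assms by (intro log_deriv_le) simp_all
  then have "u * deriv R2 u / R2 u \<le> u * deriv R1 u / R1 u"
    using mult_left_mono[of _ _ u] \<open>0 < u\<close> by fastforce
  moreover have "v * deriv R2 v / R2 v \<le> u * deriv R2 u / R2 u"
    using elasticity assms unfolding monotone_on_def by simp
  ultimately show ?thesis by linarith
qed

lemma ratio_survival_deriv_nonpos:
  assumes X: "lifetime_dist FX fX" and Y: "lifetime_dist FY fY" and hr: "hr_order FX FY"
    and "0 < z" and pos: "0 < R1 (survival FX z)" "0 < R2 (survival FY z)"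
  shows "\<exists>D. ((\<lambda>z. R1 (survival FX z) / R2 (survival FY z)) has_real_derivative D) (at z) \<and> D \<le> 0"
proof -
  let ?u = "survival FX z" and ?v = "survival FY z"
  define a where "a = deriv R1 ?u / R1 ?u"
  define b where "b = deriv R2 ?v / R2 ?v"
  have u: "0 < ?u" "?u < 1" and v: "0 < ?v" "?v < 1"
    using survival_pos[OF X] survival_less_one[OF X \<open>0 < z\<close>]
      survival_pos[OF Y] survival_less_one[OF Y \<open>0 < z\<close>] by auto
  have has_deriv: "((\<lambda>z. R1 (survival FX z) / R2 (survival FY z)) has_real_derivative
      (deriv R1 ?u * - fX z * R2 ?v - R1 ?u * (deriv R2 ?v * - fY z)) / (R2 ?v * R2 ?v)) (at z)"
    using R1_deriv[OF u] R2_deriv[OF v] survival_has_real_derivative[OF X \<open>0 < z\<close>]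
      survival_has_real_derivative[OF Y \<open>0 < z\<close>] pos
    by (intro DERIV_divide DERIV_chain2[where f = R1] DERIV_chain2[where f = R2]) auto
  have "0 \<le> a"
    unfolding a_def using R1_mono R1_deriv[OF u] u pos(1)
    by (intro divide_nonneg_pos mono_on_imp_deriv_nonneg) auto
  have elasticity: "?v * b \<le> ?u * a"
    unfolding a_def b_def using elasticity_le hr_order_survival_le[OF X Y hr] u v pos \<open>0 < z\<close>
    by simp
  have hazard: "0 \<le> hazard_rate FY fY z" "hazard_rate FY fY z \<le> hazard_rate FX fX z"
    using lifetime_distD(4)[OF Y \<open>0 < z\<close>] v hr_order_hazard_rate_le[OF X Y hr \<open>0 < z\<close>]
    by (simp_all add: hazard_rate_def)
  have "b * fY z \<le> a * fX z"
  proof (cases "b \<le> 0")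
    case True
    then show ?thesis
      using \<open>0 \<le> a\<close> lifetime_distD(4)[OF X \<open>0 < z\<close>] lifetime_distD(4)[OF Y \<open>0 < z\<close>]
      by (meson mult_nonneg_nonneg mult_nonpos_nonneg order_trans)
  next
    case False
    have "b * fY z = (?v * b) * hazard_rate FY fY z"
      using v by (simp add: hazard_rate_def)
    also have "\<dots> \<le> (?u * a) * hazard_rate FX fX z"
      by (rule mult_mono) (use elasticity hazard u \<open>0 \<le> a\<close> in auto)
    also have "\<dots> = a * fX z"
      using u by (simp add: hazard_rate_def)
    finally show ?thesis .
  qed
  then have "deriv R1 ?u * - fX z * R2 ?v - R1 ?u * (deriv R2 ?v * - fY z) \<le> 0"
    using pos mult_left_mono[of "b * fY z" "a * fX z" "R1 ?u * R2 ?v"]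
    by (simp add: a_def b_def algebra_simps)
  with has_deriv show ?thesis
    by (intro exI conjI) (auto intro: divide_nonpos_nonneg)
qed

lemma antimono_on_ratio_survival:
  assumes X: "lifetime_dist FX fX" and Y: "lifetime_dist FY fY" and hr: "hr_order FX FY"
  shows "antimono_on {0<..} (\<lambda>z. R1 (survival FX z) / R2 (survival FY z))"
proof (rule monotone_onI)
  let ?u = "survival FX" and ?v = "survival FY"
  have in01: "0 < ?u z" "?u z < 1" "0 < ?v z" "?v z < 1" if "0 < z" for z
    using survival_pos[OF X] survival_less_one[OF X that]
      survival_pos[OF Y] survival_less_one[OF Y that] by auto
  fix x y :: real
  assume "x \<in> {0<..}" "y \<in> {0<..}" "x \<le> y"
  then have "0 < x" "0 < y" by auto
  have "0 \<le> R1 (?u x) / R2 (?v x)"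
    using R1_nonneg R2_nonneg in01[OF \<open>0 < x\<close>] by simp
  show "R1 (?u y) / R2 (?v y) \<le> R1 (?u x) / R2 (?v x)"
  proof (cases "R1 (?u y) / R2 (?v y) = 0")
    case True
    with \<open>0 \<le> R1 (?u x) / R2 (?v x)\<close> show ?thesis by linarith
  next
    case False
    then have "R1 (?u y) \<noteq> 0" "R2 (?v y) \<noteq> 0" by auto
    then have pos_y: "0 < R1 (?u y)" "0 < R2 (?v y)"
      using R1_nonneg R2_nonneg in01[OF \<open>0 < y\<close>] by (auto simp: order_less_le)
    text \<open>Positivity at \<open>y\<close> propagates to \<open>[x, y]\<close>; for \<open>R\<^sub>2\<close> it passes through the
      increasing ratio \<open>R\<^sub>1/R\<^sub>2\<close>, evaluated at \<open>Fbar\<^sub>Y y \<ge> Fbar\<^sub>X y\<close>.\<close>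
    have pos: "0 < R1 (?u z)" "0 < R2 (?v z)" if "x \<le> z" "z \<le> y" for z
    proof -
      have "0 < z" using \<open>0 < x\<close> that by simp
      have "?u y \<le> ?u z" "?v y \<le> ?v z" "?u y \<le> ?v y"
        using survival_antimono[OF X] survival_antimono[OF Y] \<open>z \<le> y\<close>
          hr_order_survival_le[OF X Y hr] \<open>0 < y\<close> by auto
      then have R1_le: "R1 (?u y) \<le> R1 (?u z)" "R1 (?u y) \<le> R1 (?v y)"
        and ratio_le: "R1 (?v y) / R2 (?v y) \<le> R1 (?v z) / R2 (?v z)"
        using mono_onD[OF R1_mono] mono_onD[OF ratio_mono] in01[OF \<open>0 < y\<close>] in01[OF \<open>0 < z\<close>]
        by auto
      show "0 < R1 (?u z)"
        using pos_y R1_le by simp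
      have "0 < R1 (?v y) / R2 (?v y)"
        using pos_y R1_le by simp
      with ratio_le have "R2 (?v z) \<noteq> 0" by auto
      then show "0 < R2 (?v z)"
        using R2_nonneg[of "?v z"] in01[OF \<open>0 < z\<close>] by simp
    qed
    show ?thesis
    proof (rule DERIV_nonpos_imp_nonincreasing[OF \<open>x \<le> y\<close>])
      fix z
      assume "x \<le> z" "z \<le> y"
      then show "\<exists>D. ((\<lambda>z. R1 (?u z) / R2 (?v z)) has_real_derivative D) (at z) \<and> D \<le> 0"
        using ratio_survival_deriv_nonpos[OF X Y hr] pos \<open>0 < x\<close> by simp
    qed
  qed
qed

end

theorem theorem3p2:
  fixes FX fX FY fY F1 f1 F2 f2 h1 dh1 h2 dh2 :: "real \<Rightarrow> real"
    and R1 R2 :: "real \<Rightarrow> real"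
  assumes X: "lifetime_dist FX fX" and Y: "lifetime_dist FY fY"
    and h1: "domination_fun h1" and h2: "domination_fun h2"
    and dh1: "\<And>p. 0 < p \<Longrightarrow> p < 1 \<Longrightarrow> (h1 has_real_derivative dh1 p) (at p)"
    and dh2: "\<And>p. 0 < p \<Longrightarrow> p < 1 \<Longrightarrow> (h2 has_real_derivative dh2 p) (at p)"
    and T1: "lifetime_dist F1 f1" and T1h: "\<And>x. survival F1 x = h1 (survival FX x)"
    and T2: "lifetime_dist F2 f2" and T2h: "\<And>x. survival F2 x = h2 (survival FY x)"
    and R1_def: "\<And>p. R1 p = (1 - p) * dh1 p / (1 - h1 p)"
    and R2_def: "\<And>p. R2 p = (1 - p) * dh2 p / (1 - h2 p)"
    and R1_diff: "\<And>p. 0 < p \<Longrightarrow> p < 1 \<Longrightarrow> R1 differentiable (at p)"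
    and R2_diff: "\<And>p. 0 < p \<Longrightarrow> p < 1 \<Longrightarrow> R2 differentiable (at p)"
    and i1: "mono_on {0<..<1} R1"
    and i2: "mono_on {0<..<1} (\<lambda>p. R1 p / R2 p)"
    and ii: "antimono_on {0<..<1} (\<lambda>p. p * deriv R1 p / R1 p)
          \<or> antimono_on {0<..<1} (\<lambda>p. p * deriv R2 p / R2 p)"
    and iii1: "ages_faster_rfr FX fX FY fY"
    and iii2: "hr_order FX FY"
  shows "ages_faster_rfr F1 f1 F2 f2"
proof -
  have "0 \<le> R1 p" "0 \<le> R2 p" if "0 < p" "p < 1" for p
    unfolding R1_def R2_def using distortion_ratio_nonneg h1 h2 dh1 dh2 that by auto
  moreover have "(R1 has_real_derivative deriv R1 p) (at p)" "(R2 has_real_derivative deriv R2 p) (at p)"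
    if "0 < p" "p < 1" for p
    using R1_diff R2_diff that DERIV_deriv_iff_real_differentiable by blast+
  ultimately interpret monotone_ratio_pair R1 R2
    using i1 i2 ii by unfold_locales auto
  have rhr_ratio: "rev_hazard_rate F1 f1 z / rev_hazard_rate F2 f2 z
      = R1 (survival FX z) / R2 (survival FY z) * (rev_hazard_rate FX fX z / rev_hazard_rate FY fY z)"
    if "0 < z" for z
    using rev_hazard_rate_distorted_lifetime[OF X T1 T1h dh1 that]
      rev_hazard_rate_distorted_lifetime[OF Y T2 T2h dh2 that]
    unfolding R1_def[symmetric] R2_def[symmetric] by simp
  have "antimono_on {0<..}
      (\<lambda>z. R1 (survival FX z) / R2 (survival FY z) * (rev_hazard_rate FX fX z / rev_hazard_rate FY fY z))"
    using iii1 R1_nonneg R2_nonneg survival_pos survival_less_one X Y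
      rev_hazard_rate_nonneg[OF X] rev_hazard_rate_nonneg[OF Y]
    unfolding ages_faster_rfr_def
    by (intro antimono_on_mult_nonneg antimono_on_ratio_survival[OF X Y iii2]) auto
  then show ?thesis
    unfolding ages_faster_rfr_def monotone_on_def by (simp add: rhr_ratio)
qed

end
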